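(* Let $A=[1-\alpha^*,\alpha^*]$ with $\frac12<\alpha^*<1$, $J=[1,2]$, and for $B\subseteq\mathbb R$ let $B_{\mathbb Q}=B\cap\mathbb Q$. Let $W=\{W(t,\alpha):t\ge0,\alpha\in A\}$ be $H$-scalable, and assume that for some $q>0$, $\mathbb E\sup_{u\in J_{\mathbb Q},\alpha\in A_{\mathbb Q}}|W(u,\alpha)|^q<\infty$. Then for every rational $\delta>0$, $$\mathbb E\Big(\sup_{u\in(0,\delta]_{\mathbb Q},\alpha\in A_{\mathbb Q}}|W(u,\alpha)|^q\Big)\le\frac{\delta^{Hq}}{1-2^{-Hq}}\,\mathbb E\Big(\sup_{u\in J_{\mathbb Q},\alpha\in A_{\mathbb Q}}|W(u,\alpha)|^q\Big).$$
   Context: A process $\{W(t,\alpha):t\ge0,\alpha\in A\}$ is $H$-scalable (in $t$) if $W(0,\alpha)=0$ for all $\alpha\in A$ and, for some $H\in(0,\infty)$ and all $c\in(0,\infty)$, the processes $\{W(ct,\alpha):t\ge0,\alpha\in A\}$ and $\{c^HW(t,\alpha):t\ge0,\alpha\in A\}$ have the same finite-dimensional distributions. *)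

theory Defs
  imports "HOL-Probability.Probability"
begin

definition H_scalable ::
  "'a measure \<Rightarrow> real set \<Rightarrow> (real \<Rightarrow> real \<Rightarrow> 'a \<Rightarrow> real) \<Rightarrow> real \<Rightarrow> bool" where
  "H_scalable M A W H \<longleftrightarrow>
     0 < H \<and>
     (\<forall>\<alpha>\<in>A. \<forall>\<omega>\<in>space M. W 0 \<alpha> \<omega> = 0) \<and>
     (\<forall>c::real. c > 0 \<longrightarrow>
        (\<forall>S. finite S \<and> S \<subseteq> {0..} \<times> A \<longrightarrow>
           distr M (PiM S (\<lambda>_. borel)) (\<lambda>\<omega>. \<lambda>p\<in>S. W (c * fst p) (snd p) \<omega>)
         = distr M (PiM S (\<lambda>_. borel)) (\<lambda>\<omega>. \<lambda>p\<in>S. c powr H * W (fst p) (snd p) \<omega>)))"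

end

theory Submission
  imports Defs
begin

text \<open>By scalability, the expected supremum over the dyadic block \<open>(\<delta>/2^(k+1))\<cdot>J\<close> equals
  \<open>(\<delta>/2^(k+1))^(Hq)\<close> times the expected supremum over \<open>J\<close>. The blocks cover \<open>(0,\<delta>]\<close>, so the
  supremum over \<open>(0,\<delta>]\<close> is at most the sum of the block suprema, and summing the geometric
  series gives the bound. Scalability only concerns finite-dimensional distributions; the
  countable suprema are reached as increasing limits of finite ones by monotone convergence.\<close>

lemma borel_measurable_SUP_abs_powr:
  fixes X :: "'p \<Rightarrow> 'a \<Rightarrow> real"
  assumes "countable T" and "\<And>p. p \<in> T \<Longrightarrow> X p \<in> borel_measurable M"
  shows "(\<lambda>\<omega>. SUP p\<in>T. ennreal (\<bar>X p \<omega>\<bar> powr q)) \<in> borel_measurable M"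
  using assms by (intro borel_measurable_SUP) measurable

lemma SUP_SUP_eq_SUP_Times:
  "(SUP u\<in>U. SUP a\<in>B. g u a) = (SUP p\<in>U \<times> B. g (fst p) (snd p) :: 'b :: complete_lattice)"
  by (rule antisym) (auto intro!: SUP_least SUP_upper2)

lemma nn_integral_SUP_countable_eq_SUP_finite:
  fixes g :: "'p \<Rightarrow> 'a \<Rightarrow> ennreal"
  assumes T: "countable T" and g: "\<And>p. p \<in> T \<Longrightarrow> g p \<in> borel_measurable M"
  shows "(\<integral>\<^sup>+ \<omega>. (SUP p\<in>T. g p \<omega>) \<partial>M)
       = (SUP F\<in>{F. finite F \<and> F \<subseteq> T}. \<integral>\<^sup>+ \<omega>. (SUP p\<in>F. g p \<omega>) \<partial>M)"
proof (cases "T = {}")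
  case False
  define F where "F n = from_nat_into T ` {..n}" for n
  have F_sub: "F n \<subseteq> T" for n
    unfolding F_def using False by (auto intro: from_nat_into)
  have "T = (\<Union>n. F n)"
    using F_sub from_nat_into_surj[OF T] unfolding F_def by (fastforce simp: image_iff)
  then have "(\<integral>\<^sup>+ \<omega>. (SUP p\<in>T. g p \<omega>) \<partial>M) = (\<integral>\<^sup>+ \<omega>. (SUP n. SUP p\<in>F n. g p \<omega>) \<partial>M)"
    by (simp add: SUP_UNION)
  also have "\<dots> = (SUP n. \<integral>\<^sup>+ \<omega>. (SUP p\<in>F n. g p \<omega>) \<partial>M)"
  proof (rule nn_integral_monotone_convergence_SUP)
    show "incseq (\<lambda>n \<omega>. SUP p\<in>F n. g p \<omega>)"
      unfolding incseq_def le_fun_def F_def by (auto intro!: SUP_subset_mono)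
    show "(\<lambda>\<omega>. SUP p\<in>F n. g p \<omega>) \<in> borel_measurable M" for n
      using F_sub g unfolding F_def by (intro borel_measurable_SUP) auto
  qed
  also have "\<dots> \<le> (SUP F\<in>{F. finite F \<and> F \<subseteq> T}. \<integral>\<^sup>+ \<omega>. (SUP p\<in>F. g p \<omega>) \<partial>M)"
    using F_sub unfolding F_def by (intro SUP_mono) auto
  finally show ?thesis
    by (intro antisym SUP_least nn_integral_mono SUP_subset_mono) auto
qed simp

lemma H_scalable_nn_integral_SUP_finite:
  fixes M :: "'a measure" and W :: "real \<Rightarrow> real \<Rightarrow> 'a \<Rightarrow> real"
  assumes meas: "\<And>t \<alpha>. t \<ge> 0 \<Longrightarrow> \<alpha> \<in> A \<Longrightarrow> W t \<alpha> \<in> borel_measurable M"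
    and sc: "H_scalable M A W H" and c: "c > 0"
    and S: "finite S" "S \<subseteq> {0..} \<times> A"
  shows "(\<integral>\<^sup>+ \<omega>. (SUP p\<in>S. ennreal (\<bar>W (c * fst p) (snd p) \<omega>\<bar> powr q)) \<partial>M)
       = ennreal (c powr (H * q)) * (\<integral>\<^sup>+ \<omega>. (SUP p\<in>S. ennreal (\<bar>W (fst p) (snd p) \<omega>\<bar> powr q)) \<partial>M)"
proof -
  let ?N = "PiM S (\<lambda>_. borel :: real measure)"
  define X where "X = (\<lambda>\<omega>. \<lambda>p\<in>S. W (c * fst p) (snd p) \<omega>)"
  define Y where "Y = (\<lambda>\<omega>. \<lambda>p\<in>S. c powr H * W (fst p) (snd p) \<omega>)"
  define h where "h = (\<lambda>x::real \<times> real \<Rightarrow> real. SUP p\<in>S. ennreal (\<bar>x p\<bar> powr q))"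
  have S_meas: "W (c' * fst p) (snd p) \<in> borel_measurable M" if "p \<in> S" "c' \<ge> 0" for p c'
    using that S by (intro meas) auto
  have X: "X \<in> measurable M ?N" and Y: "Y \<in> measurable M ?N"
    unfolding X_def Y_def using S_meas c S_meas[where c'=1]
    by (auto intro!: measurable_restrict borel_measurable_times)
  have h: "h \<in> borel_measurable ?N"
    unfolding h_def using S by (intro borel_measurable_SUP_abs_powr) (auto simp: countable_finite)
  have "(\<integral>\<^sup>+ \<omega>. (SUP p\<in>S. ennreal (\<bar>W (c * fst p) (snd p) \<omega>\<bar> powr q)) \<partial>M) = (\<integral>\<^sup>+ \<omega>. h (X \<omega>) \<partial>M)"
    unfolding h_def X_def by (intro nn_integral_cong SUP_cong) auto
  also have "\<dots> = integral\<^sup>N (distr M ?N X) h" using X h by (simp add: nn_integral_distr)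
  also have "distr M ?N X = distr M ?N Y"
    using sc S c unfolding H_scalable_def X_def Y_def by blast
  also have "integral\<^sup>N (distr M ?N Y) h = (\<integral>\<^sup>+ \<omega>. h (Y \<omega>) \<partial>M)"
    using Y h by (simp add: nn_integral_distr)
  also have "\<dots> = (\<integral>\<^sup>+ \<omega>. ennreal (c powr (H * q)) * (SUP p\<in>S. ennreal (\<bar>W (fst p) (snd p) \<omega>\<bar> powr q)) \<partial>M)"
    unfolding h_def Y_def SUP_mult_left_ennreal using c
    by (intro nn_integral_cong SUP_cong) (auto simp: abs_mult powr_mult powr_powr ennreal_mult)
  also have "\<dots> = ennreal (c powr (H * q)) * (\<integral>\<^sup>+ \<omega>. (SUP p\<in>S. ennreal (\<bar>W (fst p) (snd p) \<omega>\<bar> powr q)) \<partial>M)"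
    using S S_meas[where c'=1] by (intro nn_integral_cmult borel_measurable_SUP_abs_powr)
      (auto simp: countable_finite)
  finally show ?thesis .
qed

lemma H_scalable_nn_integral_SUP:
  fixes M :: "'a measure" and W :: "real \<Rightarrow> real \<Rightarrow> 'a \<Rightarrow> real"
  assumes meas: "\<And>t \<alpha>. t \<ge> 0 \<Longrightarrow> \<alpha> \<in> A \<Longrightarrow> W t \<alpha> \<in> borel_measurable M"
    and sc: "H_scalable M A W H" and c: "c > 0"
    and T: "countable T" "T \<subseteq> {0..} \<times> A"
  shows "(\<integral>\<^sup>+ \<omega>. (SUP p\<in>T. ennreal (\<bar>W (c * fst p) (snd p) \<omega>\<bar> powr q)) \<partial>M)
       = ennreal (c powr (H * q)) * (\<integral>\<^sup>+ \<omega>. (SUP p\<in>T. ennreal (\<bar>W (fst p) (snd p) \<omega>\<bar> powr q)) \<partial>M)"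
proof -
  have T_meas: "W (c' * fst p) (snd p) \<in> borel_measurable M" if "p \<in> T" "c' \<ge> 0" for p c'
    using that T by (intro meas) auto
  have finite_eq: "(\<integral>\<^sup>+ \<omega>. (SUP p\<in>S. ennreal (\<bar>W (c * fst p) (snd p) \<omega>\<bar> powr q)) \<partial>M)
       = ennreal (c powr (H * q)) * (\<integral>\<^sup>+ \<omega>. (SUP p\<in>S. ennreal (\<bar>W (fst p) (snd p) \<omega>\<bar> powr q)) \<partial>M)"
    if "S \<in> {F. finite F \<and> F \<subseteq> T}" for S
    using that T by (intro H_scalable_nn_integral_SUP_finite[OF meas sc c]) auto
  show ?thesis
    using T T_meas[of _ c] T_meas[where c'=1] c
    by (simp add: nn_integral_SUP_countable_eq_SUP_finite finite_eq SUP_mult_left_ennreal)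
qed

lemma H_scalable_nn_integral_SUP_SUP:
  fixes M :: "'a measure" and W :: "real \<Rightarrow> real \<Rightarrow> 'a \<Rightarrow> real"
  assumes "\<And>t \<alpha>. t \<ge> 0 \<Longrightarrow> \<alpha> \<in> A \<Longrightarrow> W t \<alpha> \<in> borel_measurable M"
    and "H_scalable M A W H" and "c > 0"
    and "countable U" "U \<subseteq> {0..}" "countable B" "B \<subseteq> A"
  shows "(\<integral>\<^sup>+ \<omega>. (SUP u\<in>U. SUP \<alpha>\<in>B. ennreal (\<bar>W (c * u) \<alpha> \<omega>\<bar> powr q)) \<partial>M)
       = ennreal (c powr (H * q)) * (\<integral>\<^sup>+ \<omega>. (SUP u\<in>U. SUP \<alpha>\<in>B. ennreal (\<bar>W u \<alpha> \<omega>\<bar> powr q)) \<partial>M)"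
  unfolding SUP_SUP_eq_SUP_Times using assms by (intro H_scalable_nn_integral_SUP) auto

lemma exists_dyadic_scale:
  fixes u \<delta> :: real
  assumes "0 < u" "u \<le> \<delta>"
  shows "\<exists>k. 1 \<le> u / (\<delta> / 2 ^ Suc k) \<and> u / (\<delta> / 2 ^ Suc k) \<le> 2"
proof -
  obtain n where n: "\<delta> / u < 2 ^ n" "\<And>m. m < n \<Longrightarrow> 2 ^ m \<le> \<delta> / u"
    using real_arch_pow[of 2 "\<delta> / u"] exists_least_iff[of "\<lambda>n. \<delta> / u < (2::real) ^ n"]
    by (auto simp: not_less)
  moreover have "n \<noteq> 0"
    using n(1) assms by (cases n) (auto simp: field_simps)
  ultimately obtain k where "\<delta> / u < 2 ^ Suc k" "2 ^ k \<le> \<delta> / u"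
    by (metis lessI not0_implies_Suc)
  then show ?thesis
    using assms by (intro exI[of _ k]) (simp add: field_simps)
qed

lemma SUP_rat_interval_le_suminf_dyadic:
  fixes F :: "real \<Rightarrow> ennreal" and \<delta> :: real
  assumes "\<delta> \<in> \<rat>" "\<delta> > 0"
  shows "(SUP u\<in>{0<..\<delta>} \<inter> \<rat>. F u) \<le> (\<Sum>k. SUP t\<in>{1..2} \<inter> \<rat>. F (\<delta> / 2 ^ Suc k * t))"
proof (rule SUP_least)
  fix u assume u: "u \<in> {0<..\<delta>} \<inter> \<rat>"
  then obtain k where k: "1 \<le> u / (\<delta> / 2 ^ Suc k)" "u / (\<delta> / 2 ^ Suc k) \<le> 2"
    using exists_dyadic_scale[of u \<delta>] by auto
  have "u / (\<delta> / 2 ^ Suc k) \<in> {1..2} \<inter> \<rat>"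
    using k u assms(1) by simp
  moreover have "u = \<delta> / 2 ^ Suc k * (u / (\<delta> / 2 ^ Suc k))"
    using assms(2) by simp
  ultimately have "F u \<le> (SUP t\<in>{1..2} \<inter> \<rat>. F (\<delta> / 2 ^ Suc k * t))"
    by (metis SUP_upper)
  also have "\<dots> \<le> (\<Sum>k. SUP t\<in>{1..2} \<inter> \<rat>. F (\<delta> / 2 ^ Suc k * t))"
    by (meson ennreal_suminf_lessD not_le order_refl)
  finally show "F u \<le> (\<Sum>k. SUP t\<in>{1..2} \<inter> \<rat>. F (\<delta> / 2 ^ Suc k * t))" .
qed

lemma suminf_dyadic_powr_le:
  fixes \<delta> r :: real
  assumes "\<delta> > 0" "r > 0"
  shows "(\<Sum>k. ennreal ((\<delta> / 2 ^ Suc k) powr r)) \<le> ennreal (\<delta> powr r / (1 - 2 powr (- r)))"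
proof -
  have ratio: "2 powr (- r) < 1"
    using assms(2) by (simp add: powr_minus_divide)
  have term_le: "(\<delta> / 2 ^ Suc k) powr r \<le> \<delta> powr r * (2 powr (- r)) ^ k" for k
  proof -
    have "(2::real) ^ Suc k = 2 powr real (Suc k)"
      by (rule powr_realpow[symmetric]) simp
    then have "(\<delta> / 2 ^ Suc k) powr r = \<delta> powr r / 2 powr (real (Suc k) * r)"
      using assms by (simp add: powr_divide powr_powr)
    also have "\<dots> = \<delta> powr r * 2 powr (real (Suc k) * - r)"
      by (simp add: powr_minus_divide)
    also have "\<dots> = \<delta> powr r * (2 powr (- r)) ^ Suc k"
      by (subst powr_power) simp_all
    also have "\<dots> \<le> \<delta> powr r * (2 powr (- r)) ^ k"
      using ratio by (intro mult_left_mono) (auto simp: mult_left_le_one_le)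
    finally show ?thesis .
  qed
  have "(\<lambda>k. \<delta> powr r * (2 powr (- r)) ^ k) sums (\<delta> powr r / (1 - 2 powr (- r)))"
    using sums_mult[OF geometric_sums, of "2 powr (- r)" "\<delta> powr r"] ratio by simp
  then have "(\<Sum>k. ennreal (\<delta> powr r * (2 powr (- r)) ^ k)) = ennreal (\<delta> powr r / (1 - 2 powr (- r)))"
    using ratio by (subst (asm) sums_ennreal[symmetric]) (auto intro: sums_unique[symmetric])
  moreover have "(\<Sum>k. ennreal ((\<delta> / 2 ^ Suc k) powr r)) \<le> (\<Sum>k. ennreal (\<delta> powr r * (2 powr (- r)) ^ k))"
    by (intro suminf_le ennreal_leI term_le) auto
  ultimately show ?thesis by simp
qed

theorem lemma1:
  fixes M :: "'a measure" and W :: "real \<Rightarrow> real \<Rightarrow> 'a \<Rightarrow> real"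
    and \<alpha>s H q \<delta> :: real
  assumes "prob_space M"
    and "1/2 < \<alpha>s" and "\<alpha>s < 1"
    and "\<And>t \<alpha>. t \<ge> 0 \<Longrightarrow> \<alpha> \<in> {1 - \<alpha>s..\<alpha>s} \<Longrightarrow> W t \<alpha> \<in> borel_measurable M"
    and "H_scalable M {1 - \<alpha>s..\<alpha>s} W H"
    and "q > 0"
    and "(\<integral>\<^sup>+ \<omega>. (SUP u\<in>{1..2} \<inter> \<rat>. SUP \<alpha>\<in>{1 - \<alpha>s..\<alpha>s} \<inter> \<rat>.
              ennreal (\<bar>W u \<alpha> \<omega>\<bar> powr q)) \<partial>M) < \<infinity>"
    and "\<delta> \<in> \<rat>" and "\<delta> > 0"
  shows "(\<integral>\<^sup>+ \<omega>. (SUP u\<in>{0<..\<delta>} \<inter> \<rat>. SUP \<alpha>\<in>{1 - \<alpha>s..\<alpha>s} \<inter> \<rat>.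
              ennreal (\<bar>W u \<alpha> \<omega>\<bar> powr q)) \<partial>M)
         \<le> ennreal (\<delta> powr (H * q) / (1 - 2 powr (- (H * q))))
           * (\<integral>\<^sup>+ \<omega>. (SUP u\<in>{1..2} \<inter> \<rat>. SUP \<alpha>\<in>{1 - \<alpha>s..\<alpha>s} \<inter> \<rat>.
              ennreal (\<bar>W u \<alpha> \<omega>\<bar> powr q)) \<partial>M)"
proof -
  \<comment> \<open>In \<open>ennreal\<close> the bound holds without the finiteness hypothesis and for any measure \<open>M\<close>.\<close>
  define A where "A = {1 - \<alpha>s..\<alpha>s}"
  define E where "E = (\<integral>\<^sup>+ \<omega>. (SUP u\<in>{1..2} \<inter> \<rat>. SUP \<alpha>\<in>A \<inter> \<rat>. ennreal (\<bar>W u \<alpha> \<omega>\<bar> powr q)) \<partial>M)"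
  define G where "G k \<omega> = (SUP t\<in>{1..2} \<inter> \<rat>. SUP \<alpha>\<in>A \<inter> \<rat>.
    ennreal (\<bar>W (\<delta> / 2 ^ Suc k * t) \<alpha> \<omega>\<bar> powr q))" for k \<omega>
  have H: "H > 0"
    using assms(5) unfolding H_scalable_def by simp
  have countable: "countable ({1..2::real} \<inter> \<rat>)" "countable (A \<inter> \<rat>)"
    by (auto intro: countable_Int2 countable_rat)
  have G_integral: "(\<integral>\<^sup>+ \<omega>. G k \<omega> \<partial>M) = ennreal ((\<delta> / 2 ^ Suc k) powr (H * q)) * E" for k
    unfolding G_def E_def using assms(4,5,9) countable
    by (intro H_scalable_nn_integral_SUP_SUP) (auto simp: A_def)
  have G_measurable: "G k \<in> borel_measurable M" for k
    unfolding G_def using assms(4,9) countable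
    by (intro borel_measurable_SUP borel_measurable_SUP_abs_powr) (auto simp: A_def)
  have "(\<integral>\<^sup>+ \<omega>. (SUP u\<in>{0<..\<delta>} \<inter> \<rat>. SUP \<alpha>\<in>A \<inter> \<rat>. ennreal (\<bar>W u \<alpha> \<omega>\<bar> powr q)) \<partial>M)
      \<le> (\<integral>\<^sup>+ \<omega>. (\<Sum>k. G k \<omega>) \<partial>M)"
    unfolding G_def using assms(8,9) by (intro nn_integral_mono SUP_rat_interval_le_suminf_dyadic)
  also have "\<dots> = (\<Sum>k. ennreal ((\<delta> / 2 ^ Suc k) powr (H * q))) * E"
    by (simp add: nn_integral_suminf[OF G_measurable] G_integral)
  also have "\<dots> \<le> ennreal (\<delta> powr (H * q) / (1 - 2 powr (- (H * q)))) * E"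
    using assms(6,9) H by (intro mult_right_mono suminf_dyadic_powr_le) auto
  finally show ?thesis
    unfolding E_def A_def .
qed

end
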